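(* Let $\mathcal{C}$ be a division Cayley algebra over a field $\mathbb{F}$. Then every local automorphism of $\mathcal{C}$ is a $2$-local automorphism, and hence the set of local automorphisms of $\mathcal{C}$ equals the set of $2$-local automorphisms of $\mathcal{C}$.
   Context: A Cayley (octonion) algebra over $\mathbb{F}$ is a unital nonassociative algebra $\mathcal{C}$ of dimension $8$ over $\mathbb{F}$ endowed with a quadratic form $\mathrm{n}:\mathcal{C}\to\mathbb{F}$ (the norm) such that $\mathrm{n}(xy)=\mathrm{n}(x)\mathrm{n}(y)$ for all $x,y$ and whose polar form $\mathrm{n}(x,y)=\mathrm{n}(x+y)-\mathrm{n}(x)-\mathrm{n}(y)$ is nondegenerate; it is a division Cayley algebra if it is a division algebra (equivalently $\mathrm{n}$ is anisotropic). A linear map $\psi:\mathcal{C}\to\mathcal{C}$ is a local automorphism if for every $x\in\mathcal{C}$ there is an automorphism $\varphi_x$ of $\mathcal{C}$ with $\psi(x)=\varphi_x(x)$. A map $\Delta:\mathcal{C}\to\mathcal{C}$ (not assumed linear) is a $2$-local automorphism if for every pair $x,y\in\mathcal{C}$ there is an automorphism $\varphi_{x,y}$ of $\mathcal{C}$ with $\Delta(x)=\varphi_{x,y}(x)$ and $\Delta(y)=\varphi_{x,y}(y)$. *)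

theory Defs
  imports Complex_Main
begin

definition bilinear_map :: "('f::field \<Rightarrow> 'v::ab_group_add \<Rightarrow> 'v) \<Rightarrow> ('f \<Rightarrow> 'w::ab_group_add \<Rightarrow> 'w)
    \<Rightarrow> ('v \<Rightarrow> 'v \<Rightarrow> 'w) \<Rightarrow> bool" where
  "bilinear_map scale scale' b \<longleftrightarrow>
     (\<forall>x. Vector_Spaces.linear scale scale' (b x)) \<and>
     (\<forall>y. Vector_Spaces.linear scale scale' (\<lambda>x. b x y))"

definition norm_polar :: "('v::ab_group_add \<Rightarrow> 'f::field) \<Rightarrow> 'v \<Rightarrow> 'v \<Rightarrow> 'f" where
  "norm_polar n x y = n (x + y) - n x - n y"

definition quadratic_form :: "('f::field \<Rightarrow> 'v::ab_group_add \<Rightarrow> 'v) \<Rightarrow> ('v \<Rightarrow> 'f) \<Rightarrow> bool" where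
  "quadratic_form scale n \<longleftrightarrow>
     (\<forall>a x. n (scale a x) = a * a * n x) \<and> bilinear_map scale (*) (norm_polar n)"

definition cayley_algebra ::
  "('f::field \<Rightarrow> 'v::ab_group_add \<Rightarrow> 'v) \<Rightarrow> ('v \<Rightarrow> 'v \<Rightarrow> 'v) \<Rightarrow> 'v \<Rightarrow> ('v \<Rightarrow> 'f) \<Rightarrow> bool" where
  "cayley_algebra scale mult one n \<longleftrightarrow>
     vector_space scale \<and>
     vector_space.dim scale UNIV = 8 \<and>
     bilinear_map scale scale mult \<and>
     (\<forall>x. mult one x = x \<and> mult x one = x) \<and>
     quadratic_form scale n \<and>
     (\<forall>x y. n (mult x y) = n x * n y) \<and>
     (\<forall>x. (\<forall>y. norm_polar n x y = 0) \<longrightarrow> x = 0)"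

definition division_algebra :: "('v::ab_group_add \<Rightarrow> 'v \<Rightarrow> 'v) \<Rightarrow> bool" where
  "division_algebra mult \<longleftrightarrow> (\<forall>a. a \<noteq> 0 \<longrightarrow> bij (mult a) \<and> bij (\<lambda>x. mult x a))"

definition division_cayley_algebra ::
  "('f::field \<Rightarrow> 'v::ab_group_add \<Rightarrow> 'v) \<Rightarrow> ('v \<Rightarrow> 'v \<Rightarrow> 'v) \<Rightarrow> 'v \<Rightarrow> ('v \<Rightarrow> 'f) \<Rightarrow> bool" where
  "division_cayley_algebra scale mult one n \<longleftrightarrow>
     cayley_algebra scale mult one n \<and> division_algebra mult"

definition algebra_automorphism ::
  "('f::field \<Rightarrow> 'v::ab_group_add \<Rightarrow> 'v) \<Rightarrow> ('v \<Rightarrow> 'v \<Rightarrow> 'v) \<Rightarrow> ('v \<Rightarrow> 'v) \<Rightarrow> bool" where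
  "algebra_automorphism scale mult \<phi> \<longleftrightarrow>
     Vector_Spaces.linear scale scale \<phi> \<and> bij \<phi> \<and> (\<forall>x y. \<phi> (mult x y) = mult (\<phi> x) (\<phi> y))"

definition local_automorphism ::
  "('f::field \<Rightarrow> 'v::ab_group_add \<Rightarrow> 'v) \<Rightarrow> ('v \<Rightarrow> 'v \<Rightarrow> 'v) \<Rightarrow> ('v \<Rightarrow> 'v) \<Rightarrow> bool" where
  "local_automorphism scale mult \<psi> \<longleftrightarrow>
     Vector_Spaces.linear scale scale \<psi> \<and>
     (\<forall>x. \<exists>\<phi>. algebra_automorphism scale mult \<phi> \<and> \<psi> x = \<phi> x)"

definition two_local_automorphism ::
  "('f::field \<Rightarrow> 'v::ab_group_add \<Rightarrow> 'v) \<Rightarrow> ('v \<Rightarrow> 'v \<Rightarrow> 'v) \<Rightarrow> ('v \<Rightarrow> 'v) \<Rightarrow> bool" where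
  "two_local_automorphism scale mult \<Delta> \<longleftrightarrow>
     (\<forall>x y. \<exists>\<phi>. algebra_automorphism scale mult \<phi> \<and> \<Delta> x = \<phi> x \<and> \<Delta> y = \<phi> y)"

end

theory Submission
  imports Defs
begin

(* Automorphisms preserve the norm n, hence the trace t and the polar form, and so do local
   automorphisms. Given a local automorphism psi and elements x, y, choose an automorphism theta
   with theta x = psi x; it suffices to find an automorphism fixing X = psi x and mapping theta y
   to psi y, two elements with the same norm, trace and polar product with X. This is a
   transitivity property of the stabiliser of a non-scalar X. If the discriminant
   t(X)^2 - 4 n(X) is nonzero, the plane F1 + FX is a nondegenerate subalgebra: after removing a
   common component in it, the orthogonal parts are matched by extending the identity of F1 + FX
   through two Cayley-Dickson doublings, which exhaust the 8-dimensional algebra. A non-scalar X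
   with vanishing discriminant forces characteristic 2 and t(X) = 0; then the same doubling
   argument runs on the subalgebra generated by XY, or on a quaternion subalgebra built from X and
   an element of trace 1. Exchanging x and y if necessary, one of these cases applies.

   Conversely, a 2-local automorphism Delta preserves n and its polar form, so
   Delta (a + b) - Delta a - Delta b and Delta (c a) - c Delta a have norm 0. By anisotropy Delta
   is linear, hence a local automorphism. *)

section \<open>Nondegenerate bilinear forms in finite dimension\<close>

lemma vector_space_field: "vector_space ((*) :: 'a::field \<Rightarrow> 'a \<Rightarrow> 'a)"
  by unfold_locales (auto simp: algebra_simps)

context finite_dimensional_vector_space
begin

lemma independent_family_span_UNIV:
  fixes f :: "nat \<Rightarrow> 'b"
  assumes indep: "\<And>c. (\<Sum>i<dim UNIV. c i *s f i) = 0 \<Longrightarrow> \<forall>i<dim UNIV. c i = 0"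
  shows "span (f ` {..<dim UNIV}) = UNIV"
proof -
  let ?I = "{..<dim UNIV}"
  have inj: "inj_on f ?I"
  proof (rule inj_onI)
    fix i j assume ij: "i \<in> ?I" "j \<in> ?I" "f i = f j"
    define c where "c k = (if k = i then 1 else 0) - (if k = j then 1 else (0::'a))" for k
    have "(\<Sum>k\<in>?I. c k *s f k) = f i - f j"
      using ij by (simp add: c_def scale_left_diff_distrib sum_subtractf if_distrib[of "\<lambda>a. a *s _"]
          cong: if_cong)
    then have "c i = 0" using indep ij by simp
    then show "i = j" by (simp add: c_def split: if_splits)
  qed
  have "independent (f ` ?I)"
    unfolding independent_explicit
  proof (intro conjI allI impI ballI)
    fix c v assume s: "(\<Sum>v\<in>f ` ?I. c v *s v) = 0" and v: "v \<in> f ` ?I"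
    have "(\<Sum>i\<in>?I. c (f i) *s f i) = 0" using s by (simp add: sum.reindex[OF inj] del: dim_UNIV)
    then have "\<forall>i<dim UNIV. c (f i) = 0" by (rule indep)
    then show "c v = 0" using v by auto
  qed simp
  moreover have "card (f ` ?I) = dim UNIV" using card_image[OF inj] by simp
  ultimately show ?thesis using card_ge_dim_independent[of "f ` ?I" UNIV] by auto
qed

lemma nondegenerate_form_represents:
  assumes left: "\<And>y. Vector_Spaces.linear scale (*) (\<lambda>x. B x y)"
    and right: "\<And>x. Vector_Spaces.linear scale (*) (B x)"
    and nondeg: "\<And>x. (\<And>y. B x y = 0) \<Longrightarrow> x = 0"
    and f: "Vector_Spaces.linear scale (*) f"
  shows "\<exists>u. \<forall>z. B u z = f z"
proof -
  interpret vsp: vector_space_pair scale "(*) :: 'a \<Rightarrow> 'a \<Rightarrow> 'a"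
    by (simp add: vector_space_pair_def vector_space_axioms vector_space_field)
  define M where "M u = (\<Sum>b\<in>Basis. B u b *s b)" for u
  have B_add: "B (x + y) b = B x b + B y b" and B_scale: "B (c *s x) b = c * B x b" for x y c b
    using left[of b] unfolding Vector_Spaces.linear_iff by blast+
  have linM: "Vector_Spaces.linear scale scale M"
    unfolding Vector_Spaces.linear_iff
  proof (intro conjI allI vector_space_axioms)
    show "M (x + y) = M x + M y" for x y
      unfolding M_def by (simp add: B_add scale_left_distrib sum.distrib)
    show "M (c *s x) = c *s M x" for c x
      unfolding M_def by (simp add: B_scale scale_sum_right)
  qed
  have coeff: "B u b = g b"
    if "(\<Sum>b\<in>Basis. B u b *s b) = (\<Sum>b\<in>Basis. g b *s b)" "b \<in> Basis" for u g b
  proof -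
    have "(\<Sum>b\<in>Basis. (B u b - g b) *s b) = 0"
      using that(1) by (simp add: scale_left_diff_distrib sum_subtractf)
    from independentD[OF independent_Basis finite_Basis order_refl this that(2)] show ?thesis
      by simp
  qed
  have "inj M"
    unfolding module_hom.inj_iff_eq_0[OF linM[unfolded module_hom_iff_linear[symmetric]]]
  proof (intro allI impI)
    fix u assume "M u = 0"
    then have "B u b = 0" if "b \<in> Basis" for b
      using coeff[of u "\<lambda>_. 0" b] that by (simp add: M_def)
    then have "B u z = 0" for z
      using vsp.linear_eq_on[OF right vsp.linear_zero, of z Basis] span_Basis by simp
    then show "u = 0" by (rule nondeg)
  qed
  then have "surj M" by (rule linear_inj_imp_surj[OF linM])
  then obtain u where "M u = (\<Sum>b\<in>Basis. f b *s b)"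
    by (metis surjE)
  then have "B u b = f b" if "b \<in> Basis" for b
    using coeff[of u f b] that by (simp add: M_def)
  then have "B u z = f z" for z using vsp.linear_eq_on[OF right f, of z Basis] span_Basis by simp
  then show ?thesis by blast
qed

end

locale cayley = vector_space scale
  for scale :: "'f::field \<Rightarrow> 'v::ab_group_add \<Rightarrow> 'v" (infixr \<open>*s\<close> 75) +
  fixes mult :: "'v \<Rightarrow> 'v \<Rightarrow> 'v" (infixl \<open>\<odot>\<close> 70)
    and one :: 'v and n :: "'v \<Rightarrow> 'f"
  assumes cayley: "cayley_algebra scale mult one n"
begin

abbreviation polar :: "'v \<Rightarrow> 'v \<Rightarrow> 'f" where "polar \<equiv> norm_polar n"

definition trace :: "'v \<Rightarrow> 'f" where "trace x = polar x one"

definition conjugate :: "'v \<Rightarrow> 'v" where "conjugate x = trace x *s one - x"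

lemma dim_UNIV_eq_8: "dim UNIV = 8"
  using cayley unfolding cayley_algebra_def by blast

lemma mult_left_linear: "Vector_Spaces.linear scale scale (\<lambda>x. x \<odot> y)"
  and mult_right_linear: "Vector_Spaces.linear scale scale (\<lambda>y. x \<odot> y)"
  using cayley unfolding cayley_algebra_def bilinear_map_def by blast+

lemma cmult_add_left: "(a + b) \<odot> c = a \<odot> c + b \<odot> c"
  and cmult_scale_left: "(k *s a) \<odot> c = k *s (a \<odot> c)"
  using mult_left_linear[of c] unfolding Vector_Spaces.linear_iff by blast+

lemma cmult_add_right: "c \<odot> (a + b) = c \<odot> a + c \<odot> b"
  and cmult_scale_right: "c \<odot> (k *s a) = k *s (c \<odot> a)"
  using mult_right_linear[of c] unfolding Vector_Spaces.linear_iff by blast+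

lemma cmult_zero_left: "0 \<odot> c = 0"
  using cmult_scale_left[of 0 0 c] by simp

lemma cmult_zero_right: "c \<odot> 0 = 0"
  using cmult_scale_right[of c 0 0] by simp

lemma cmult_minus_left: "(- a) \<odot> c = - (a \<odot> c)"
  using cmult_scale_left[of "-1" a c] by simp

lemma cmult_minus_right: "c \<odot> (- a) = - (c \<odot> a)"
  using cmult_scale_right[of c "-1" a] by simp

lemma cmult_diff_left: "(a - b) \<odot> c = a \<odot> c - b \<odot> c"
  by (simp only: diff_conv_add_uminus cmult_add_left cmult_minus_left)

lemma cmult_diff_right: "c \<odot> (a - b) = c \<odot> a - c \<odot> b"
  by (simp only: diff_conv_add_uminus cmult_add_right cmult_minus_right)

lemmas cmult_simps = cmult_add_left cmult_add_right cmult_scale_left cmult_scale_right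
  cmult_zero_left cmult_zero_right cmult_minus_left cmult_minus_right cmult_diff_left cmult_diff_right

lemma one_cmult [simp]: "one \<odot> x = x"
  and cmult_one [simp]: "x \<odot> one = x"
  using cayley by (simp_all add: cayley_algebra_def)

lemma n_scale: "n (k *s x) = k * k * n x"
  using cayley by (simp add: cayley_algebra_def quadratic_form_def)

lemma n_mult: "n (x \<odot> y) = n x * n y"
  using cayley by (simp add: cayley_algebra_def)

lemma polar_nondegenerate: "(\<And>y. polar x y = 0) \<Longrightarrow> x = 0"
  using cayley by (auto simp add: cayley_algebra_def)

lemma polar_left_linear: "Vector_Spaces.linear scale (*) (\<lambda>x. polar x y)"
  and polar_right_linear: "Vector_Spaces.linear scale (*) (polar x)"
  using cayley by (simp_all add: cayley_algebra_def quadratic_form_def bilinear_map_def)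

lemma polar_add_left: "polar (a + b) c = polar a c + polar b c"
  and polar_scale_left: "polar (k *s a) c = k * polar a c"
  using polar_left_linear[of c] unfolding Vector_Spaces.linear_iff by blast+

lemma polar_add_right: "polar c (a + b) = polar c a + polar c b"
  and polar_scale_right: "polar c (k *s a) = k * polar c a"
  using polar_right_linear[of c] unfolding Vector_Spaces.linear_iff by blast+

lemma polar_zero_left: "polar 0 c = 0"
  using polar_scale_left[of 0 0 c] by simp

lemma polar_zero_right: "polar c 0 = 0"
  using polar_scale_right[of c 0 0] by simp

lemma polar_minus_left: "polar (- a) c = - polar a c"
  using polar_scale_left[of "-1" a c] by simp

lemma polar_minus_right: "polar c (- a) = - polar c a"
  using polar_scale_right[of c "-1" a] by simp

lemma polar_diff_left: "polar (a - b) c = polar a c - polar b c"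
  by (simp only: diff_conv_add_uminus polar_add_left polar_minus_left)

lemma polar_diff_right: "polar c (a - b) = polar c a - polar c b"
  by (simp only: diff_conv_add_uminus polar_add_right polar_minus_right)

lemmas polar_simps = polar_add_left polar_add_right polar_scale_left polar_scale_right
  polar_zero_left polar_zero_right polar_minus_left polar_minus_right polar_diff_left polar_diff_right

lemma polar_commute: "polar a b = polar b a"
  by (simp add: norm_polar_def add.commute)

lemma n_add: "n (a + b) = n a + n b + polar a b"
  by (simp add: norm_polar_def)

lemma n_zero [simp]: "n 0 = 0"
  using n_scale[of 0 0] by simp

lemma n_minus: "n (- a) = n a"
  using n_scale[of "-1" a] by simp

lemma n_diff: "n (a - b) = n a + n b - polar a b"
  using n_add[of a "- b"] by (simp add: n_minus polar_minus_right)

lemma polar_self: "polar a a = 2 * n a"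
proof -
  have "a + a = 2 *s a"
    by (simp add: scale_left_distrib[of 1 1, simplified])
  then show ?thesis by (simp add: norm_polar_def n_scale)
qed

definition basis :: "'v set" where
  "basis = (SOME B. finite B \<and> independent B \<and> span B = UNIV)"

sublocale fdim: finite_dimensional_vector_space scale basis
proof -
  obtain B where B: "B \<subseteq> UNIV" "independent B" "UNIV \<subseteq> span B" "card B = dim UNIV"
    by (rule basis_exists)
  then have "finite B"
    using dim_UNIV_eq_8 by (intro card_ge_0_finite) simp
  with B have "\<exists>B. finite B \<and> independent B \<and> span B = UNIV"
    by blast
  then have "finite basis \<and> independent basis \<and> span basis = UNIV"
    unfolding basis_def by (rule someI_ex)
  then show "finite_dimensional_vector_space scale basis"
    by (simp add: finite_dimensional_vector_space_def finite_dimensional_vector_space_axioms_def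
        vector_space_axioms)
qed

lemma n_one: "n one = 1"
proof (rule ccontr)
  assume "n one \<noteq> 1"
  moreover have "n one * (n one - 1) = 0"
    using n_mult[of one one] by (simp add: algebra_simps)
  ultimately have "n x = 0" for x
    using n_mult[of one x] by simp
  then have "polar x y = 0" for x y
    by (simp add: norm_polar_def)
  then have "x = 0" for x :: 'v
    by (rule polar_nondegenerate)
  then have "dim (UNIV :: 'v set) = 0"
    by (subst fdim.dim_eq_0) blast
  then show False using dim_UNIV_eq_8 by simp
qed

lemma one_neq_zero: "one \<noteq> 0"
  using n_one by auto

lemma trace_one [simp]: "trace one = 2"
  using polar_self[of one] n_one by (simp add: trace_def)

lemma polar_one_left: "polar one e = trace e"
  by (simp add: trace_def polar_commute)

lemma polar_mult_left_same: "polar (x \<odot> y) (x \<odot> z) = n x * polar y z"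
proof -
  have "n (x \<odot> (y + z)) = n x * n (y + z)" by (rule n_mult)
  then show ?thesis by (simp add: cmult_add_right n_add n_mult algebra_simps)
qed

lemma polar_mult_right_same: "polar (x \<odot> z) (y \<odot> z) = polar x y * n z"
proof -
  have "n ((x + y) \<odot> z) = n (x + y) * n z" by (rule n_mult)
  then show ?thesis by (simp add: cmult_add_left n_add n_mult algebra_simps)
qed

lemma polar_mult_exchange: "polar (x \<odot> y) (w \<odot> z) + polar (w \<odot> y) (x \<odot> z) = polar x w * polar y z"
proof -
  have "polar ((x + w) \<odot> y) ((x + w) \<odot> z) = n (x + w) * polar y z" by (rule polar_mult_left_same)
  then show ?thesis
    by (simp add: cmult_add_left polar_add_left polar_add_right n_add polar_mult_left_same
        algebra_simps polar_commute[of w x])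
qed

lemma trace_add: "trace (a + b) = trace a + trace b"
  and trace_scale: "trace (k *s a) = k * trace a"
  and trace_diff: "trace (a - b) = trace a - trace b"
  by (simp_all add: trace_def polar_simps)

lemma polar_mult_left_adjoint: "polar (x \<odot> y) z = polar y (conjugate x \<odot> z)"
proof -
  have "polar (x \<odot> y) (one \<odot> z) + polar (one \<odot> y) (x \<odot> z) = polar x one * polar y z"
    by (rule polar_mult_exchange)
  then show ?thesis
    by (simp add: conjugate_def cmult_simps polar_simps trace_def polar_commute[of y] algebra_simps)
qed

lemma polar_mult_right_adjoint: "polar (x \<odot> y) z = polar x (z \<odot> conjugate y)"
proof -
  have "polar (x \<odot> y) (z \<odot> one) + polar (z \<odot> y) (x \<odot> one) = polar x z * polar y one"
    by (rule polar_mult_exchange)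
  then show ?thesis
    by (simp add: conjugate_def cmult_simps polar_simps trace_def polar_commute[of x] algebra_simps)
qed

lemma conjugate_conjugate [simp]: "conjugate (conjugate x) = x"
  by (simp add: conjugate_def trace_diff trace_scale)

lemma conjugate_add: "conjugate (a + b) = conjugate a + conjugate b"
  by (simp add: conjugate_def trace_add algebra_simps)

lemma conjugate_trace_zero: "trace w = 0 \<Longrightarrow> conjugate w = - w"
  by (simp add: conjugate_def)

lemma polar_conjugate_right: "polar a (conjugate b) = trace a * trace b - polar a b"
  by (simp add: conjugate_def polar_simps trace_def polar_commute[of one])

lemma conjugate_mult_cancel_left: "conjugate x \<odot> (x \<odot> y) = n x *s y"
proof -
  have "polar (conjugate x \<odot> (x \<odot> y) - n x *s y) z = 0" for z
    using polar_mult_left_adjoint[of "conjugate x" "x \<odot> y" z]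
    by (simp add: polar_diff_left polar_mult_left_same polar_scale_left)
  then show ?thesis using polar_nondegenerate by force
qed

lemma mult_conjugate_cancel_right: "(y \<odot> x) \<odot> conjugate x = n x *s y"
proof -
  have "polar ((y \<odot> x) \<odot> conjugate x - n x *s y) z = 0" for z
    using polar_mult_right_adjoint[of "y \<odot> x" "conjugate x" z]
    by (simp add: polar_diff_left polar_mult_right_same polar_scale_left mult.commute)
  then show ?thesis using polar_nondegenerate by force
qed

lemma mult_self: "x \<odot> x = trace x *s x - n x *s one"
  using conjugate_mult_cancel_left[of x one]
  by (simp add: conjugate_def cmult_simps algebra_simps)

lemma mult_anticommutator: "x \<odot> y + y \<odot> x = trace x *s y + trace y *s x - polar x y *s one"
proof -
  have "x \<odot> y + y \<odot> x = (x + y) \<odot> (x + y) - x \<odot> x - y \<odot> y"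
    by (simp add: cmult_simps algebra_simps)
  then show ?thesis
    by (simp only: mult_self) (simp add: trace_add n_add algebra_simps)
qed

lemma conjugate_mult_cancel_left_polarized:
  "conjugate x \<odot> (z \<odot> y) + conjugate z \<odot> (x \<odot> y) = polar x z *s y"
  using conjugate_mult_cancel_left[of "x + z" y]
  by (simp add: cmult_simps conjugate_add conjugate_mult_cancel_left n_add algebra_simps)

lemma mult_conjugate_cancel_right_polarized:
  "(y \<odot> x) \<odot> conjugate z + (y \<odot> z) \<odot> conjugate x = polar x z *s y"
  using mult_conjugate_cancel_right[of y "x + z"]
  by (simp add: cmult_simps conjugate_add mult_conjugate_cancel_right n_add algebra_simps)

lemma trace_mult: "trace (x \<odot> y) = trace x * trace y - polar x y"
  by (simp add: trace_def polar_mult_left_adjoint polar_conjugate_right polar_commute[of y])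

lemma conjugate_mult: "conjugate (x \<odot> y) = conjugate y \<odot> conjugate x"
proof -
  have "y \<odot> x = trace x *s y + trace y *s x - polar x y *s one - x \<odot> y"
    using mult_anticommutator[of x y] by (simp add: algebra_simps)
  then show ?thesis by (simp add: conjugate_def trace_mult cmult_simps algebra_simps)
qed

lemma perp_mult_commute:
  assumes "trace w = 0" "polar w c = 0"
  shows "w \<odot> c = conjugate c \<odot> w"
proof -
  have "w \<odot> c + c \<odot> w = trace c *s w"
    using mult_anticommutator[of w c] assms by simp
  then show ?thesis by (simp add: conjugate_def cmult_simps algebra_simps)
qed

lemma perp_mult_assoc:
  assumes tw: "trace w = 0" and "polar w a = 0" "polar w b = 0" "polar w (b \<odot> a) = 0"
  shows "a \<odot> (b \<odot> w) = (b \<odot> a) \<odot> w"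
proof -
  have "conjugate (conjugate a) \<odot> (w \<odot> conjugate b) + conjugate w \<odot> (conjugate a \<odot> conjugate b)
      = polar (conjugate a) w *s conjugate b"
    by (rule conjugate_mult_cancel_left_polarized)
  moreover have "polar (conjugate a) w = 0"
    using assms by (simp add: polar_commute[of _ w] polar_conjugate_right trace_def)
  ultimately have "a \<odot> (w \<odot> conjugate b) = w \<odot> conjugate (b \<odot> a)"
    using tw by (simp add: conjugate_trace_zero conjugate_mult cmult_simps)
  moreover have "w \<odot> conjugate b = b \<odot> w" "w \<odot> conjugate (b \<odot> a) = (b \<odot> a) \<odot> w"
    using perp_mult_commute[OF tw, of "conjugate b"] perp_mult_commute[OF tw, of "conjugate (b \<odot> a)"]
      assms by (simp_all add: polar_conjugate_right trace_def)
  ultimately show ?thesis by simp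
qed

lemma perp_mult_right:
  assumes tw: "trace w = 0" and "polar w b = 0"
  shows "(a \<odot> w) \<odot> b = (a \<odot> conjugate b) \<odot> w"
proof -
  have "(a \<odot> conjugate b) \<odot> conjugate w + (a \<odot> w) \<odot> conjugate (conjugate b)
      = polar (conjugate b) w *s a"
    by (rule mult_conjugate_cancel_right_polarized)
  moreover have "polar (conjugate b) w = 0"
    using assms by (simp add: polar_commute[of _ w] polar_conjugate_right trace_def)
  ultimately show ?thesis
    using tw by (simp add: conjugate_trace_zero cmult_simps algebra_simps)
qed

lemma perp_mult_perp:
  assumes tw: "trace w = 0" and "polar w a = 0" "polar w b = 0" "polar w (b \<odot> a) = 0"
  shows "(a \<odot> w) \<odot> (b \<odot> w) = - (n w *s (conjugate b \<odot> a))"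
proof -
  have tbw: "trace (b \<odot> w) = 0"
    using assms by (simp add: trace_def polar_mult_left_adjoint polar_commute[of _ w] polar_conjugate_right)
  have "(a \<odot> (b \<odot> w)) \<odot> conjugate w + (a \<odot> w) \<odot> conjugate (b \<odot> w) = polar (b \<odot> w) w *s a"
    by (rule mult_conjugate_cancel_right_polarized)
  moreover have "polar (b \<odot> w) w = trace b * n w"
    using polar_mult_right_same[of b w one] by (simp add: trace_def)
  ultimately have "- ((a \<odot> w) \<odot> (b \<odot> w)) = (a \<odot> (b \<odot> w)) \<odot> w + (trace b * n w) *s a"
    using tw tbw by (simp add: conjugate_trace_zero cmult_simps algebra_simps)
  then have "(a \<odot> w) \<odot> (b \<odot> w) = - ((a \<odot> (b \<odot> w)) \<odot> w) - (trace b * n w) *s a"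
    by (metis minus_add_distrib minus_minus diff_conv_add_uminus)
  also have "\<dots> = n w *s (b \<odot> a) - (trace b * n w) *s a"
    using mult_conjugate_cancel_right[of "b \<odot> a" w] perp_mult_assoc[OF assms] tw
    by (simp add: conjugate_trace_zero cmult_simps)
  finally show ?thesis by (simp add: conjugate_def cmult_simps algebra_simps)
qed

lemma exists_polar_dual:
  assumes "v \<notin> span S"
  shows "\<exists>u. polar u v = 1 \<and> (\<forall>s\<in>S. polar u s = 0)"
proof -
  interpret vsp: vector_space_pair scale "(*) :: 'f \<Rightarrow> 'f \<Rightarrow> 'f"
    by (simp add: vector_space_pair_def vector_space_axioms vector_space_field)
  obtain T where T: "T \<subseteq> S" "independent T" "S \<subseteq> span T"
    by (rule maximal_independent_subset)
  have "v \<notin> span T" using assms T(1) span_mono by blast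
  then have vT: "v \<notin> T" and ind: "independent (insert v T)"
    using span_base independent_insertI[OF _ T(2)] by auto
  define f where "f = vsp.construct (insert v T) (\<lambda>b. if b = v then 1 else 0)"
  have lf: "Vector_Spaces.linear scale (*) f"
    unfolding f_def by (rule vsp.linear_construct[OF ind])
  have "f v = 1" "\<And>b. b \<in> T \<Longrightarrow> f b = 0"
    unfolding f_def using vT by (auto simp: vsp.construct_basis[OF ind])
  then have "f s = 0" if "s \<in> S" for s
    using vsp.linear_eq_on[OF lf vsp.linear_zero, of s T] T(3) that by auto
  moreover obtain u where "\<forall>z. polar u z = f z"
    using fdim.nondegenerate_form_represents[OF polar_left_linear polar_right_linear
        polar_nondegenerate lf] by blast
  ultimately show ?thesis using \<open>f v = 1\<close> by metis
qed

lemma exists_nonzero_perp: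
  assumes "length xs < 8"
  shows "\<exists>u. u \<noteq> 0 \<and> (\<forall>s\<in>set xs. polar u s = 0)"
proof -
  have "span (set xs) \<noteq> UNIV"
  proof
    assume "span (set xs) = UNIV"
    then have "dim (UNIV :: 'v set) \<le> length xs"
      using dim_le_card[of UNIV "set xs"] card_length[of xs] by auto
    then show False using dim_UNIV_eq_8 assms by simp
  qed
  then obtain v where "v \<notin> span (set xs)" by auto
  from exists_polar_dual[OF this] obtain u where "polar u v = 1" "\<forall>s\<in>set xs. polar u s = 0"
    by blast
  moreover have "u \<noteq> 0" using \<open>polar u v = 1\<close> by (auto simp: polar_zero_left)
  ultimately show ?thesis by blast
qed

section \<open>Automorphisms and local automorphisms\<close>

abbreviation aut :: "('v \<Rightarrow> 'v) \<Rightarrow> bool" where "aut \<equiv> algebra_automorphism scale mult"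

lemma aut_add: "aut \<phi> \<Longrightarrow> \<phi> (a + b) = \<phi> a + \<phi> b"
  and aut_scale: "aut \<phi> \<Longrightarrow> \<phi> (c *s a) = c *s \<phi> a"
  and aut_mult: "aut \<phi> \<Longrightarrow> \<phi> (a \<odot> b) = \<phi> a \<odot> \<phi> b"
  and aut_bij: "aut \<phi> \<Longrightarrow> bij \<phi>"
  unfolding algebra_automorphism_def Vector_Spaces.linear_iff by auto

lemma aut_minus: "aut \<phi> \<Longrightarrow> \<phi> (- a) = - \<phi> a"
  using aut_scale[of \<phi> "-1" a] by simp

lemma aut_diff: "aut \<phi> \<Longrightarrow> \<phi> (a - b) = \<phi> a - \<phi> b"
  using aut_add[of \<phi> "a - b" b] by (simp add: algebra_simps)

lemma aut_one: assumes "aut \<phi>" shows "\<phi> one = one"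
proof -
  have "\<phi> one \<odot> \<phi> z = \<phi> z" for z
    using aut_mult[OF assms, of one z] by simp
  moreover obtain z where "one = \<phi> z"
    using aut_bij[OF assms] by (metis bij_pointE)
  ultimately show ?thesis by (metis cmult_one)
qed

lemma aut_scale_one: "aut \<phi> \<Longrightarrow> \<phi> (c *s one) = c *s one"
  by (simp add: aut_scale aut_one)

lemma aut_n: assumes \<phi>: "aut \<phi>" shows "n (\<phi> x) = n x"
proof -
  have "\<phi> x \<odot> \<phi> x = trace x *s \<phi> x - n x *s one"
    using arg_cong[OF mult_self[of x], of \<phi>] \<phi> by (simp add: aut_mult aut_diff aut_scale aut_one)
  then have eq: "(trace (\<phi> x) - trace x) *s \<phi> x = (n (\<phi> x) - n x) *s one"
    using mult_self[of "\<phi> x"] by (simp add: algebra_simps)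
  show ?thesis
  proof (cases "trace (\<phi> x) = trace x")
    case True
    then show ?thesis using eq one_neq_zero by simp
  next
    case False
    then have "\<phi> x = (inverse (trace (\<phi> x) - trace x) * (n (\<phi> x) - n x)) *s one"
      using arg_cong[OF eq, of "scale (inverse (trace (\<phi> x) - trace x))"] by simp
    then have "x = (inverse (trace (\<phi> x) - trace x) * (n (\<phi> x) - n x)) *s one"
      using bij_is_inj[OF aut_bij[OF \<phi>]] aut_scale_one[OF \<phi>] by (metis injD)
    then show ?thesis using aut_scale_one[OF \<phi>] by metis
  qed
qed

lemma aut_polar: "aut \<phi> \<Longrightarrow> polar (\<phi> x) (\<phi> y) = polar x y"
  by (simp add: norm_polar_def aut_n flip: aut_add)

lemma aut_trace: "aut \<phi> \<Longrightarrow> trace (\<phi> x) = trace x"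
  using aut_polar[of \<phi> x one] by (simp add: trace_def aut_one)

lemma aut_comp: "aut f \<Longrightarrow> aut g \<Longrightarrow> aut (f \<circ> g)"
  unfolding algebra_automorphism_def by (auto intro: Vector_Spaces.linear_compose bij_comp)

lemma aut_id: "aut id"
  unfolding algebra_automorphism_def by (simp add: Vector_Spaces.linear_iff vector_space_axioms)

lemma local_aut_add: "local_automorphism scale mult \<psi> \<Longrightarrow> \<psi> (a + b) = \<psi> a + \<psi> b"
  and local_aut_scale: "local_automorphism scale mult \<psi> \<Longrightarrow> \<psi> (c *s a) = c *s \<psi> a"
  and local_aut_pointwise: "local_automorphism scale mult \<psi> \<Longrightarrow> \<exists>\<phi>. aut \<phi> \<and> \<psi> z = \<phi> z"
  unfolding local_automorphism_def Vector_Spaces.linear_iff by auto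

lemma local_aut_n: "local_automorphism scale mult \<psi> \<Longrightarrow> n (\<psi> z) = n z"
  using local_aut_pointwise aut_n by metis

lemma local_aut_one: "local_automorphism scale mult \<psi> \<Longrightarrow> \<psi> one = one"
  using local_aut_pointwise aut_one by metis

lemma local_aut_scale_one: "local_automorphism scale mult \<psi> \<Longrightarrow> \<psi> (c *s one) = c *s one"
  by (simp add: local_aut_scale local_aut_one)

lemma local_aut_polar: "local_automorphism scale mult \<psi> \<Longrightarrow> polar (\<psi> a) (\<psi> b) = polar a b"
  by (simp add: norm_polar_def local_aut_n flip: local_aut_add)

lemma local_aut_trace: "local_automorphism scale mult \<psi> \<Longrightarrow> trace (\<psi> a) = trace a"
  using local_aut_polar[of \<psi> a one] by (simp add: trace_def local_aut_one)

section \<open>Subalgebras and Cayley--Dickson doubling\<close>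

definition subalgebra :: "'v set \<Rightarrow> bool" where
  "subalgebra A \<longleftrightarrow> subspace A \<and> one \<in> A \<and> (\<forall>a\<in>A. \<forall>b\<in>A. a \<odot> b \<in> A)"

definition perp :: "'v \<Rightarrow> 'v set \<Rightarrow> bool" where
  "perp w A \<longleftrightarrow> (\<forall>a\<in>A. polar w a = 0)"

definition double :: "'v set \<Rightarrow> 'v \<Rightarrow> 'v set" where
  "double A w = {a + b \<odot> w | a b. a \<in> A \<and> b \<in> A}"

definition isometric_hom_on :: "('v \<Rightarrow> 'v) \<Rightarrow> 'v set \<Rightarrow> 'v set \<Rightarrow> bool" where
  "isometric_hom_on \<sigma> A A' \<longleftrightarrow> \<sigma> ` A \<subseteq> A' \<and> \<sigma> one = one \<and>
     (\<forall>a\<in>A. \<forall>b\<in>A. \<sigma> (a + b) = \<sigma> a + \<sigma> b \<and> \<sigma> (a \<odot> b) = \<sigma> a \<odot> \<sigma> b) \<and>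
     (\<forall>a\<in>A. \<forall>c. \<sigma> (c *s a) = c *s \<sigma> a) \<and> (\<forall>a\<in>A. n (\<sigma> a) = n a)"

lemma subalgebra_one: "subalgebra A \<Longrightarrow> one \<in> A"
  and subalgebra_mult: "subalgebra A \<Longrightarrow> a \<in> A \<Longrightarrow> b \<in> A \<Longrightarrow> a \<odot> b \<in> A"
  and subalgebra_add: "subalgebra A \<Longrightarrow> a \<in> A \<Longrightarrow> b \<in> A \<Longrightarrow> a + b \<in> A"
  and subalgebra_scale: "subalgebra A \<Longrightarrow> a \<in> A \<Longrightarrow> c *s a \<in> A"
  and subalgebra_zero: "subalgebra A \<Longrightarrow> 0 \<in> A"
  and subalgebra_minus: "subalgebra A \<Longrightarrow> a \<in> A \<Longrightarrow> - a \<in> A"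
  and subalgebra_diff: "subalgebra A \<Longrightarrow> a \<in> A \<Longrightarrow> b \<in> A \<Longrightarrow> a - b \<in> A"
  by (simp_all add: subalgebra_def subspace_add subspace_scale subspace_0 subspace_neg subspace_diff)

lemma subalgebra_conjugate: "subalgebra A \<Longrightarrow> a \<in> A \<Longrightarrow> conjugate a \<in> A"
  unfolding conjugate_def by (intro subalgebra_diff subalgebra_scale subalgebra_one)

lemmas subalgebra_closed = subalgebra_one subalgebra_mult subalgebra_add subalgebra_scale
  subalgebra_zero subalgebra_minus subalgebra_diff subalgebra_conjugate

lemma ihom_mem: "isometric_hom_on \<sigma> A A' \<Longrightarrow> a \<in> A \<Longrightarrow> \<sigma> a \<in> A'"
  and ihom_one: "isometric_hom_on \<sigma> A A' \<Longrightarrow> \<sigma> one = one"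
  and ihom_add: "isometric_hom_on \<sigma> A A' \<Longrightarrow> a \<in> A \<Longrightarrow> b \<in> A \<Longrightarrow> \<sigma> (a + b) = \<sigma> a + \<sigma> b"
  and ihom_mult: "isometric_hom_on \<sigma> A A' \<Longrightarrow> a \<in> A \<Longrightarrow> b \<in> A \<Longrightarrow> \<sigma> (a \<odot> b) = \<sigma> a \<odot> \<sigma> b"
  and ihom_scale: "isometric_hom_on \<sigma> A A' \<Longrightarrow> a \<in> A \<Longrightarrow> \<sigma> (c *s a) = c *s \<sigma> a"
  and ihom_n: "isometric_hom_on \<sigma> A A' \<Longrightarrow> a \<in> A \<Longrightarrow> n (\<sigma> a) = n a"
  by (auto simp: isometric_hom_on_def)

lemma ihom_diff:
  "isometric_hom_on \<sigma> A A' \<Longrightarrow> subalgebra A \<Longrightarrow> a \<in> A \<Longrightarrow> b \<in> A \<Longrightarrow> \<sigma> (a - b) = \<sigma> a - \<sigma> b"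
  using ihom_add[of \<sigma> A A' "a - b" b] subalgebra_diff by (simp add: algebra_simps)

lemma ihom_zero: "isometric_hom_on \<sigma> A A' \<Longrightarrow> subalgebra A \<Longrightarrow> \<sigma> 0 = 0"
  using ihom_scale[of \<sigma> A A' one 0] subalgebra_one by simp

lemma ihom_trace:
  assumes "isometric_hom_on \<sigma> A A'" "subalgebra A" "a \<in> A"
  shows "trace (\<sigma> a) = trace a"
  using assms ihom_n[OF assms(1) subalgebra_add[OF assms(2,3) subalgebra_one]]
  by (simp add: subalgebra_one ihom_add ihom_one n_add ihom_n trace_def)

lemma ihom_conjugate:
  "isometric_hom_on \<sigma> A A' \<Longrightarrow> subalgebra A \<Longrightarrow> a \<in> A \<Longrightarrow> \<sigma> (conjugate a) = conjugate (\<sigma> a)"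
  by (simp add: conjugate_def ihom_diff subalgebra_closed ihom_scale ihom_one ihom_trace)

lemma perp_trace: "perp w A \<Longrightarrow> subalgebra A \<Longrightarrow> trace w = 0"
  by (simp add: perp_def trace_def subalgebra_one)

lemma double_mult:
  assumes A: "subalgebra A" and w: "perp w A" and abcd: "a \<in> A" "b \<in> A" "c \<in> A" "d \<in> A"
  shows "(a + b \<odot> w) \<odot> (c + d \<odot> w)
    = (a \<odot> c - n w *s (conjugate d \<odot> b)) + (d \<odot> a + b \<odot> conjugate c) \<odot> w"
proof -
  have tw: "trace w = 0" by (rule perp_trace[OF w A])
  have pw: "\<And>x. x \<in> A \<Longrightarrow> polar w x = 0" using w by (simp add: perp_def)
  have "a \<odot> (d \<odot> w) = (d \<odot> a) \<odot> w"
    using abcd A pw by (intro perp_mult_assoc[OF tw]) (auto simp: subalgebra_mult)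
  moreover have "(b \<odot> w) \<odot> c = (b \<odot> conjugate c) \<odot> w"
    using abcd pw by (intro perp_mult_right[OF tw]) auto
  moreover have "(b \<odot> w) \<odot> (d \<odot> w) = - (n w *s (conjugate d \<odot> b))"
    using abcd A pw by (intro perp_mult_perp[OF tw]) (auto simp: subalgebra_mult)
  ultimately show ?thesis by (simp add: cmult_simps algebra_simps)
qed

lemma double_cases:
  assumes "x \<in> double A w"
  obtains a b where "a \<in> A" "b \<in> A" "x = a + b \<odot> w"
  using assms by (auto simp: double_def)

lemma double_memI: "a \<in> A \<Longrightarrow> b \<in> A \<Longrightarrow> a + b \<odot> w \<in> double A w"
  by (auto simp: double_def)

lemma mem_double_base: "subalgebra A \<Longrightarrow> a \<in> A \<Longrightarrow> a \<in> double A w"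
  using double_memI[of a A 0] by (simp add: subalgebra_zero cmult_zero_left)

lemma mem_double_generator: "subalgebra A \<Longrightarrow> w \<in> double A w"
  using double_memI[of 0 A one] by (simp add: subalgebra_zero subalgebra_one)

lemma subalgebra_double:
  assumes A: "subalgebra A" and w: "perp w A"
  shows "subalgebra (double A w)"
  unfolding subalgebra_def subspace_def
proof (intro conjI ballI allI)
  show "0 \<in> double A w" "one \<in> double A w"
    using A by (simp_all add: mem_double_base subalgebra_zero subalgebra_one)
  fix x y assume "x \<in> double A w" "y \<in> double A w"
  then obtain a b c d where abcd: "a \<in> A" "b \<in> A" "c \<in> A" "d \<in> A"
    and xy: "x = a + b \<odot> w" "y = c + d \<odot> w" by (metis double_cases)
  have "x + y = (a + c) + (b + d) \<odot> w"
    by (simp add: xy cmult_add_left algebra_simps)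
  then show "x + y \<in> double A w"
    using A abcd by (simp add: double_memI subalgebra_add)
  show "x \<odot> y \<in> double A w"
    unfolding xy double_mult[OF A w abcd] using A abcd by (intro double_memI) (simp_all add: subalgebra_closed)
  fix k
  have "k *s x = k *s a + (k *s b) \<odot> w"
    by (simp add: xy cmult_scale_left scale_right_distrib)
  then show "k *s x \<in> double A w"
    using A abcd by (simp add: double_memI subalgebra_scale)
qed

lemma n_double:
  assumes A: "subalgebra A" and w: "perp w A" and ab: "a \<in> A" "b \<in> A"
  shows "n (a + b \<odot> w) = n a + n b * n w"
proof -
  have "polar a (b \<odot> w) = polar w (conjugate b \<odot> a)"
    by (simp add: polar_commute[of a] polar_mult_left_adjoint)
  also have "\<dots> = 0"
    using w A ab by (simp add: perp_def subalgebra_closed)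
  finally show ?thesis by (simp add: n_add n_mult)
qed

section \<open>Subalgebras generated by one element\<close>

definition disc :: "'v \<Rightarrow> 'f" where
  "disc e = trace e * trace e - 4 * n e"

definition gen_subalgebra :: "'v \<Rightarrow> 'v set" where
  "gen_subalgebra e = {\<alpha> *s one + \<beta> *s e | \<alpha> \<beta>. True}"

definition gen_iso :: "'v \<Rightarrow> 'v \<Rightarrow> 'v \<Rightarrow> 'v" where
  "gen_iso e e' z = (SOME z'. \<exists>\<alpha> \<beta>. z = \<alpha> *s one + \<beta> *s e \<and> z' = \<alpha> *s one + \<beta> *s e')"

lemma gen_memI: "\<alpha> *s one + \<beta> *s e \<in> gen_subalgebra e"
  by (auto simp: gen_subalgebra_def)

lemma gen_cases:
  assumes "x \<in> gen_subalgebra e"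
  obtains \<alpha> \<beta> where "x = \<alpha> *s one + \<beta> *s e"
  using assms by (auto simp: gen_subalgebra_def)

lemma one_mem_gen: "one \<in> gen_subalgebra e"
  using gen_memI[of 1 0 e] by simp

lemma mem_gen: "e \<in> gen_subalgebra e"
  using gen_memI[of 0 1 e] by simp

lemma gen_mult:
  "(a *s one + b *s e) \<odot> (c *s one + d *s e)
    = (a * c - b * d * n e) *s one + (a * d + b * c + b * d * trace e) *s e"
  by (simp add: cmult_simps mult_self algebra_simps)

lemma n_gen: "n (\<alpha> *s one + \<beta> *s e) = \<alpha> * \<alpha> + \<alpha> * \<beta> * trace e + \<beta> * \<beta> * n e"
  by (simp add: n_add n_scale n_one polar_simps polar_one_left algebra_simps)

lemma polar_gen_one: "polar (\<alpha> *s one + \<beta> *s e) one = 2 * \<alpha> + \<beta> * trace e"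
  by (simp add: polar_simps trace_def polar_self n_one)

lemma polar_gen_generator: "polar (\<alpha> *s one + \<beta> *s e) e = \<alpha> * trace e + \<beta> * (2 * n e)"
  by (simp add: polar_simps polar_one_left polar_self)

lemma subalgebra_gen: "subalgebra (gen_subalgebra e)"
  unfolding subalgebra_def subspace_def
proof (intro conjI ballI allI)
  show "0 \<in> gen_subalgebra e" using gen_memI[of 0 0 e] by simp
  show "one \<in> gen_subalgebra e" by (rule one_mem_gen)
  fix x y assume "x \<in> gen_subalgebra e" "y \<in> gen_subalgebra e"
  then obtain a b c d where xy: "x = a *s one + b *s e" "y = c *s one + d *s e"
    by (metis gen_cases)
  have "x + y = (a + c) *s one + (b + d) *s e" by (simp add: xy algebra_simps)
  then show "x + y \<in> gen_subalgebra e" by (simp add: gen_memI)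
  show "x \<odot> y \<in> gen_subalgebra e" by (simp add: xy gen_mult gen_memI)
  fix k
  have "k *s x = (k * a) *s one + (k * b) *s e" by (simp add: xy algebra_simps)
  then show "k *s x \<in> gen_subalgebra e" by (simp add: gen_memI)
qed

lemma disc_scale_one: "disc (c *s one) = 0"
  by (simp add: disc_def n_scale n_one trace_scale algebra_simps)

lemma gen_coeffs_unique:
  assumes d: "disc e \<noteq> 0" and eq: "\<alpha> *s one + \<beta> *s e = \<alpha>' *s one + \<beta>' *s e"
  shows "\<alpha> = \<alpha>' \<and> \<beta> = \<beta>'"
proof -
  have b: "\<beta> = \<beta>'"
  proof (rule ccontr)
    assume "\<beta> \<noteq> \<beta>'"
    moreover have "(\<beta> - \<beta>') *s e = (\<alpha>' - \<alpha>) *s one"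
      using eq by (simp add: algebra_simps)
    ultimately have "e = (inverse (\<beta> - \<beta>') * (\<alpha>' - \<alpha>)) *s one"
      by (metis left_inverse right_minus_eq scale_one scale_scale)
    then show False using d disc_scale_one by simp
  qed
  then have "(\<alpha> - \<alpha>') *s one = 0"
    using eq by (simp add: algebra_simps)
  then show ?thesis using b one_neq_zero by simp
qed

lemma gen_nondegenerate:
  assumes d: "disc e \<noteq> 0" and k: "k \<in> gen_subalgebra e"
    and "polar k one = 0" "polar k e = 0"
  shows "k = 0"
proof -
  obtain a b where kk: "k = a *s one + b *s e" using k by (rule gen_cases)
  have h: "2 * a + b * trace e = 0" "a * trace e + b * (2 * n e) = 0"
    using assms by (simp_all add: kk polar_gen_one polar_gen_generator)
  have "b * disc e = trace e * (2 * a + b * trace e) - 2 * (a * trace e + b * (2 * n e))"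
    by (simp add: disc_def algebra_simps)
  then have "b = 0" using h d by simp
  have "a * disc e = trace e * (a * trace e + b * (2 * n e)) - 2 * n e * (2 * a + b * trace e)"
    by (simp add: disc_def algebra_simps)
  then have "a = 0" using h d by simp
  with \<open>b = 0\<close> show ?thesis by (simp add: kk)
qed

lemma perp_gen: "polar w one = 0 \<Longrightarrow> polar w e = 0 \<Longrightarrow> perp w (gen_subalgebra e)"
  by (auto simp: perp_def gen_subalgebra_def polar_simps)

lemma perp_notin_gen:
  "disc e \<noteq> 0 \<Longrightarrow> w \<noteq> 0 \<Longrightarrow> perp w (gen_subalgebra e) \<Longrightarrow> w \<notin> gen_subalgebra e"
  using gen_nondegenerate[of e w] one_mem_gen mem_gen by (auto simp: perp_def)

lemma gen_iso_eq:
  assumes "disc e \<noteq> 0"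
  shows "gen_iso e e' (\<alpha> *s one + \<beta> *s e) = \<alpha> *s one + \<beta> *s e'"
proof -
  let ?Q = "\<lambda>z'. \<exists>a b. \<alpha> *s one + \<beta> *s e = a *s one + b *s e \<and> z' = a *s one + b *s e'"
  have "?Q (SOME z'. ?Q z')" by (rule someI[of _ "\<alpha> *s one + \<beta> *s e'"]) blast
  then show ?thesis
    using gen_coeffs_unique[OF assms] unfolding gen_iso_def by metis
qed

lemma perp_double_gen_iff:
  "perp w (double (gen_subalgebra e) w1) \<longleftrightarrow>
     polar w one = 0 \<and> polar w e = 0 \<and> polar w w1 = 0 \<and> polar w (e \<odot> w1) = 0"
proof
  assume "perp w (double (gen_subalgebra e) w1)"
  moreover have "one \<in> double (gen_subalgebra e) w1" "e \<in> double (gen_subalgebra e) w1"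
    "w1 \<in> double (gen_subalgebra e) w1" "e \<odot> w1 \<in> double (gen_subalgebra e) w1"
    using subalgebra_gen double_memI[of 0 "gen_subalgebra e" e w1]
    by (simp_all add: mem_double_base mem_double_generator one_mem_gen mem_gen subalgebra_zero)
  ultimately show "polar w one = 0 \<and> polar w e = 0 \<and> polar w w1 = 0 \<and> polar w (e \<odot> w1) = 0"
    by (simp add: perp_def)
qed (auto simp: perp_def double_def gen_subalgebra_def polar_simps cmult_simps)

lemma ihom_gen_iso:
  assumes d: "disc e \<noteq> 0" and tt: "trace e' = trace e" and nn: "n e' = n e"
  shows "isometric_hom_on (gen_iso e e') (gen_subalgebra e) (gen_subalgebra e')"
  unfolding isometric_hom_on_def
proof (intro conjI ballI allI subsetI)
  note S = gen_iso_eq[OF d, of e']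
  show "gen_iso e e' one = one" using S[of 1 0] by simp
  fix x y assume "x \<in> gen_subalgebra e" "y \<in> gen_subalgebra e"
  then obtain a b c d where xy: "x = a *s one + b *s e" "y = c *s one + d *s e"
    by (metis gen_cases)
  have "x + y = (a + c) *s one + (b + d) *s e" by (simp add: xy algebra_simps)
  then have "gen_iso e e' (x + y) = (a + c) *s one + (b + d) *s e'" by (simp only: S)
  then show "gen_iso e e' (x + y) = gen_iso e e' x + gen_iso e e' y"
    by (simp add: S xy algebra_simps)
  show "gen_iso e e' (x \<odot> y) = gen_iso e e' x \<odot> gen_iso e e' y"
    by (simp add: xy S gen_mult tt nn)
  show "n (gen_iso e e' x) = n x" by (simp add: xy S n_gen tt nn)
  fix k
  have "k *s x = (k * a) *s one + (k * b) *s e" by (simp add: xy algebra_simps)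
  then have "gen_iso e e' (k *s x) = (k * a) *s one + (k * b) *s e'" by (simp only: S)
  then show "gen_iso e e' (k *s x) = k *s gen_iso e e' x" by (simp add: xy S algebra_simps)
next
  fix z assume "z \<in> gen_iso e e' ` gen_subalgebra e"
  then show "z \<in> gen_subalgebra e'"
    by (auto simp: gen_iso_eq[OF d] gen_memI elim!: gen_cases)
qed

lemma gen_polar_interpolation:
  assumes d: "disc e \<noteq> 0"
  shows "\<exists>\<alpha> \<beta>. polar (\<alpha> *s one + \<beta> *s e) one = a0 \<and> polar (\<alpha> *s one + \<beta> *s e) e = a1"
proof -
  define \<alpha> where "\<alpha> = (trace e * a1 - 2 * n e * a0) / disc e"
  define \<beta> where "\<beta> = (trace e * a0 - 2 * a1) / disc e"
  have a: "\<alpha> * disc e = trace e * a1 - 2 * n e * a0" and b: "\<beta> * disc e = trace e * a0 - 2 * a1"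
    using d by (simp_all add: \<alpha>_def \<beta>_def)
  have "(2 * \<alpha> + \<beta> * trace e) * disc e = 2 * (\<alpha> * disc e) + trace e * (\<beta> * disc e)"
    by (simp add: algebra_simps)
  also have "\<dots> = a0 * disc e"
    by (unfold a b) (simp add: disc_def algebra_simps)
  finally have "2 * \<alpha> + \<beta> * trace e = a0" using d by simp
  have "(\<alpha> * trace e + \<beta> * (2 * n e)) * disc e = trace e * (\<alpha> * disc e) + 2 * n e * (\<beta> * disc e)"
    by (simp add: algebra_simps)
  also have "\<dots> = a1 * disc e"
    by (unfold a b) (simp add: disc_def algebra_simps)
  finally have "\<alpha> * trace e + \<beta> * (2 * n e) = a1" using d by simp
  with \<open>2 * \<alpha> + \<beta> * trace e = a0\<close> show ?thesis by (auto simp: polar_gen_one polar_gen_generator)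
qed

lemma gen_common_projection:
  assumes d: "disc e \<noteq> 0" and "polar z1 one = polar z2 one" "polar z1 e = polar z2 e"
  obtains p where "p \<in> gen_subalgebra e"
    "polar (z1 - p) one = 0" "polar (z1 - p) e = 0" "polar (z2 - p) one = 0" "polar (z2 - p) e = 0"
proof -
  obtain \<alpha> \<beta> where "polar (\<alpha> *s one + \<beta> *s e) one = polar z1 one"
    "polar (\<alpha> *s one + \<beta> *s e) e = polar z1 e"
    using gen_polar_interpolation[OF d] by blast
  then show ?thesis
    by (intro that[OF gen_memI[of \<alpha> \<beta> e]]) (use assms in \<open>simp_all add: polar_diff_left\<close>)
qed

lemma aut_fixes_gen: "aut \<phi> \<Longrightarrow> \<phi> e = e \<Longrightarrow> z \<in> gen_subalgebra e \<Longrightarrow> \<phi> z = z"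
  by (auto simp: aut_add aut_scale aut_one elim: gen_cases)

lemma aut_fixes_double_gen:
  "aut \<phi> \<Longrightarrow> \<phi> e = e \<Longrightarrow> \<phi> w = w \<Longrightarrow> z \<in> double (gen_subalgebra e) w \<Longrightarrow> \<phi> z = z"
  by (auto simp: aut_add aut_mult aut_fixes_gen elim!: double_cases)

lemma perp_quaternion_residue:
  assumes X: "trace X = 0" "n X \<noteq> 0" and uX: "polar u X = 0" and YX: "polar Y X = 0"
    and p: "p \<in> gen_subalgebra u" "polar (Y - p) one = 0" "polar (Y - p) u = 0"
    and b: "b \<in> gen_subalgebra u"
      "polar (Y \<odot> conjugate X - n X *s b) one = 0" "polar (Y \<odot> conjugate X - n X *s b) u = 0"
  shows "perp (Y - (p + b \<odot> X)) (double (gen_subalgebra u) X)"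
proof -
  let ?U = "gen_subalgebra u"
  have U: "subalgebra ?U" by (rule subalgebra_gen)
  have "perp X ?U" using X uX by (intro perp_gen) (simp_all add: trace_def polar_commute)
  then have bXU: "polar (b' \<odot> X) c = 0" if "b' \<in> ?U" "c \<in> ?U" for b' c
    using that U by (simp add: polar_mult_left_adjoint perp_def subalgebra_closed)
  have YcX: "polar (Y \<odot> conjugate X) c = polar Y (c \<odot> X)" for c
    by (simp add: polar_mult_right_adjoint)
  have "polar b one = 0" "polar (Y \<odot> conjugate X) u = n X * polar b u"
    using b YX YcX[of one] X(2) by (simp_all add: polar_diff_left polar_scale_left polar_commute[of X])
  then have "polar (Y - (p + b \<odot> X)) c = 0" if "c \<in> {one, u, X, u \<odot> X}" for c
    using that p b bXU[OF b(1) one_mem_gen] bXU[OF b(1) mem_gen] bXU[OF p(1) one_mem_gen]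
      bXU[OF p(1) mem_gen] bXU[OF mem_gen p(1)] \<open>perp X ?U\<close>[unfolded perp_def] YX YcX[of u] X
      polar_mult_right_same[of b X one] polar_mult_right_same[of b X u]
    by (auto simp: polar_simps polar_commute[of _ X] polar_commute[of _ "u \<odot> X"])
  then show ?thesis unfolding perp_double_gen_iff by simp
qed

lemma double_gen_common_projection:
  assumes du: "disc u \<noteq> 0" and X: "trace X = 0" "n X \<noteq> 0" "polar u X = 0"
    and Y: "trace Y1 = trace Y2" "polar X Y1 = 0" "polar X Y2 = 0"
    and u: "polar u (Y1 - Y2) = 0" "polar u ((Y1 - Y2) \<odot> conjugate X) = 0"
  obtains q where "q \<in> double (gen_subalgebra u) X"
    "perp (Y1 - q) (double (gen_subalgebra u) X)" "perp (Y2 - q) (double (gen_subalgebra u) X)"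
proof -
  let ?U = "gen_subalgebra u"
  obtain p where p: "p \<in> ?U" "polar (Y1 - p) one = 0" "polar (Y1 - p) u = 0"
    "polar (Y2 - p) one = 0" "polar (Y2 - p) u = 0"
    using gen_common_projection[OF du, of Y1 Y2] Y u(1)
    by (auto simp: trace_def polar_diff_right polar_commute[of u])
  obtain b0 where b0: "b0 \<in> ?U" "polar (Y1 \<odot> conjugate X - b0) one = 0"
    "polar (Y1 \<odot> conjugate X - b0) u = 0" "polar (Y2 \<odot> conjugate X - b0) one = 0"
    "polar (Y2 \<odot> conjugate X - b0) u = 0"
    using gen_common_projection[OF du, of "Y1 \<odot> conjugate X" "Y2 \<odot> conjugate X"] Y u(2)
    by (auto simp: polar_mult_right_adjoint polar_commute[of X] polar_commute[of u]
        polar_diff_right cmult_diff_left)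
  define b where "b = inverse (n X) *s b0"
  have b: "b \<in> ?U" "n X *s b = b0"
    using b0(1) X(2) subalgebra_gen by (simp_all add: b_def subalgebra_scale)
  show ?thesis
  proof (rule that)
    show "p + b \<odot> X \<in> double ?U X" using p(1) b(1) by (rule double_memI)
    show "perp (Y1 - (p + b \<odot> X)) (double ?U X)" "perp (Y2 - (p + b \<odot> X)) (double ?U X)"
      using perp_quaternion_residue[OF X, of Y1 p b] perp_quaternion_residue[OF X, of Y2 p b]
        p b b0 Y by (simp_all add: polar_commute[of X])
  qed
qed

end

lemma four_eq_0_if_two_eq_0:
  assumes "(2::'a::semiring_1) = 0"
  shows "4 = (0::'a)"
proof -
  have "(4::'a) = 2 * 2" by simp
  then show ?thesis using assms by simp
qed

section \<open>Transitivity of stabilisers in division Cayley algebras\<close>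

locale division_cayley = cayley scale mult one n
  for scale :: "'f::field \<Rightarrow> 'v::ab_group_add \<Rightarrow> 'v" (infixr \<open>*s\<close> 75)
    and mult :: "'v \<Rightarrow> 'v \<Rightarrow> 'v" (infixl \<open>\<odot>\<close> 70) and one n +
  assumes division: "division_algebra mult"
begin

lemma n_eq_0_iff: "n x = 0 \<longleftrightarrow> x = 0"
proof
  assume nx: "n x = 0"
  show "x = 0"
  proof (cases "conjugate x = 0")
    case True
    then have "x = trace x *s one" by (simp add: conjugate_def)
    then have "n x = trace x * trace x" using n_scale[of "trace x" one] n_one by simp
    with nx have "trace x = 0" by simp
    with \<open>x = trace x *s one\<close> show ?thesis by simp
  next
    case False
    then have "inj ((\<odot>) (conjugate x))"
      using division bij_is_inj by (auto simp: division_algebra_def)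
    moreover have "conjugate x \<odot> (x \<odot> one) = conjugate x \<odot> 0"
      using conjugate_mult_cancel_left[of x one] nx by (simp add: cmult_zero_right)
    ultimately show ?thesis by (simp add: inj_eq)
  qed
qed simp

lemma cmult_eq_0_iff: "x \<odot> y = 0 \<longleftrightarrow> x = 0 \<or> y = 0"
  using n_mult[of x y] by (auto simp: n_eq_0_iff cmult_zero_left cmult_zero_right)

lemma aut_if_isometric_hom_on_UNIV:
  assumes \<sigma>: "isometric_hom_on \<sigma> UNIV A"
  shows "aut \<sigma>"
proof -
  have lin: "Vector_Spaces.linear scale scale \<sigma>"
    unfolding Vector_Spaces.linear_iff using ihom_add[OF \<sigma>] ihom_scale[OF \<sigma>] vector_space_axioms
    by blast
  interpret \<sigma>: Vector_Spaces.linear scale scale \<sigma> by (rule lin)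
  have "inj \<sigma>"
    unfolding \<sigma>.inj_iff_eq_0
  proof (intro allI impI)
    fix x assume "\<sigma> x = 0"
    then have "n x = 0" using ihom_n[OF \<sigma>, of x] by simp
    then show "x = 0" by (simp add: n_eq_0_iff)
  qed
  then have "bij \<sigma>"
    using fdim.linear_inj_imp_surj[OF lin] by (simp add: bij_def)
  then show ?thesis
    using lin ihom_mult[OF \<sigma>] by (simp add: algebra_automorphism_def)
qed

lemma double_coeffs_unique:
  assumes A: "subalgebra A" and wA: "w \<notin> A" and abcd: "a \<in> A" "b \<in> A" "c \<in> A" "d \<in> A"
    and eq: "a + b \<odot> w = c + d \<odot> w"
  shows "a = c \<and> b = d"
proof -
  have ef: "(b - d) \<odot> w = c - a"
    using eq by (simp add: cmult_simps algebra_simps)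
  have "b - d = 0"
  proof (rule ccontr)
    assume "b - d \<noteq> 0"
    then have "n (b - d) \<noteq> 0" by (simp add: n_eq_0_iff)
    moreover have "n (b - d) *s w = conjugate (b - d) \<odot> (c - a)"
      using conjugate_mult_cancel_left[of "b - d" w] ef by simp
    ultimately have "w = inverse (n (b - d)) *s (conjugate (b - d) \<odot> (c - a))"
      by (metis scale_one scale_scale left_inverse)
    moreover have "inverse (n (b - d)) *s (conjugate (b - d) \<odot> (c - a)) \<in> A"
      using A abcd by (simp add: subalgebra_closed)
    ultimately show False using wA by simp
  qed
  then show ?thesis using ef by (simp add: cmult_zero_left)
qed

definition double_ext where
  "double_ext A \<sigma> w w' z =
     (let p = SOME p. fst p \<in> A \<and> snd p \<in> A \<and> z = fst p + snd p \<odot> w in \<sigma> (fst p) + \<sigma> (snd p) \<odot> w')"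

lemma double_ext_eq:
  assumes A: "subalgebra A" and wA: "w \<notin> A" and ab: "a \<in> A" "b \<in> A"
  shows "double_ext A \<sigma> w w' (a + b \<odot> w) = \<sigma> a + \<sigma> b \<odot> w'"
proof -
  let ?Q = "\<lambda>p. fst p \<in> A \<and> snd p \<in> A \<and> a + b \<odot> w = fst p + snd p \<odot> w"
  have "?Q (SOME p. ?Q p)" by (rule someI[of _ "(a, b)"]) (simp add: ab)
  then have "a = fst (SOME p. ?Q p) \<and> b = snd (SOME p. ?Q p)"
    using double_coeffs_unique[OF A wA ab] by blast
  then show ?thesis unfolding double_ext_def Let_def by simp
qed

context
  fixes A A' \<sigma> w w'
  assumes A: "subalgebra A" and A': "subalgebra A'" and \<sigma>: "isometric_hom_on \<sigma> A A'"
    and w: "perp w A" and wA: "w \<notin> A" and w': "perp w' A'" and nw: "n w' = n w"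
begin

lemma double_ext_base: "a \<in> A \<Longrightarrow> double_ext A \<sigma> w w' a = \<sigma> a"
  using double_ext_eq[OF A wA, of a 0 \<sigma> w'] A \<sigma>
  by (simp add: subalgebra_zero ihom_zero cmult_zero_left)

lemma double_ext_generator: "double_ext A \<sigma> w w' w = w'"
  using double_ext_eq[OF A wA, of 0 one \<sigma> w'] A \<sigma>
  by (simp add: subalgebra_zero subalgebra_one ihom_zero ihom_one)

lemma isometric_hom_on_double_ext:
  "isometric_hom_on (double_ext A \<sigma> w w') (double A w) (double A' w')"
  unfolding isometric_hom_on_def
proof (intro conjI ballI allI subsetI)
  let ?T = "double_ext A \<sigma> w w'"
  have T: "\<And>a b. a \<in> A \<Longrightarrow> b \<in> A \<Longrightarrow> ?T (a + b \<odot> w) = \<sigma> a + \<sigma> b \<odot> w'"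
    by (rule double_ext_eq[OF A wA])
  show "?T one = one"
    using double_ext_base A \<sigma> by (simp add: subalgebra_one ihom_one)
  fix x y assume "x \<in> double A w" "y \<in> double A w"
  then obtain a b c d where abcd: "a \<in> A" "b \<in> A" "c \<in> A" "d \<in> A"
    and xy: "x = a + b \<odot> w" "y = c + d \<odot> w" by (metis double_cases)
  have "x + y = (a + c) + (b + d) \<odot> w"
    by (simp add: xy cmult_add_left algebra_simps)
  then have "?T (x + y) = \<sigma> (a + c) + \<sigma> (b + d) \<odot> w'"
    using abcd A by (simp add: T subalgebra_add)
  then show "?T (x + y) = ?T x + ?T y"
    using abcd \<sigma> by (simp add: T xy ihom_add cmult_add_left algebra_simps)
  have "?T (x \<odot> y) = \<sigma> (a \<odot> c - n w *s (conjugate d \<odot> b)) + \<sigma> (d \<odot> a + b \<odot> conjugate c) \<odot> w'"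
    using abcd A by (simp add: xy double_mult[OF A w] T subalgebra_closed)
  also have "\<dots> = (\<sigma> a \<odot> \<sigma> c - n w' *s (conjugate (\<sigma> d) \<odot> \<sigma> b))
      + (\<sigma> d \<odot> \<sigma> a + \<sigma> b \<odot> conjugate (\<sigma> c)) \<odot> w'"
    using abcd A \<sigma> nw
    by (simp add: subalgebra_closed ihom_add ihom_diff ihom_mult ihom_scale ihom_conjugate)
  also have "\<dots> = ?T x \<odot> ?T y"
    using abcd \<sigma> by (simp add: xy T double_mult[OF A' w'] ihom_mem)
  finally show "?T (x \<odot> y) = ?T x \<odot> ?T y" .
  show "n (?T x) = n x"
    using abcd \<sigma> nw by (simp add: xy T n_double[OF A' w'] n_double[OF A w] ihom_n ihom_mem)
  fix k
  have "k *s x = k *s a + (k *s b) \<odot> w"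
    by (simp add: xy cmult_scale_left scale_right_distrib)
  then have "?T (k *s x) = \<sigma> (k *s a) + \<sigma> (k *s b) \<odot> w'"
    using abcd A by (simp add: T subalgebra_scale)
  then show "?T (k *s x) = k *s ?T x"
    using abcd \<sigma> by (simp add: xy T ihom_scale cmult_scale_left scale_right_distrib)
next
  fix z assume "z \<in> double_ext A \<sigma> w w' ` double A w"
  then obtain a b where "a \<in> A" "b \<in> A" "z = double_ext A \<sigma> w w' (a + b \<odot> w)"
    by (auto elim!: double_cases)
  then show "z \<in> double A' w'"
    using \<sigma> by (simp add: double_ext_eq[OF A wA] ihom_mem double_memI)
qed

end

lemma perp_notin_double_gen:
  assumes d: "disc e \<noteq> 0" and w1: "perp w1 (gen_subalgebra e)" "w1 \<noteq> 0"
    and w2: "perp w2 (double (gen_subalgebra e) w1)" "w2 \<noteq> 0"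
  shows "w2 \<notin> double (gen_subalgebra e) w1"
proof
  let ?K = "gen_subalgebra e"
  assume "w2 \<in> double ?K w1"
  then obtain a b where ab: "a \<in> ?K" "b \<in> ?K" "w2 = a + b \<odot> w1" by (rule double_cases)
  have K: "subalgebra ?K" by (rule subalgebra_gen)
  have "polar a k = 0" if k: "k \<in> ?K" for k
  proof -
    have "polar (b \<odot> w1) k = polar w1 (conjugate b \<odot> k)" by (rule polar_mult_left_adjoint)
    also have "\<dots> = 0" using w1 K ab k by (simp add: perp_def subalgebra_closed)
    moreover have "polar w2 k = 0"
      using w2(1) mem_double_base[OF K k] by (simp add: perp_def)
    ultimately show ?thesis
      using ab(3) by (simp add: polar_add_left)
  qed
  then have "a = 0" using gen_nondegenerate[OF d ab(1)] one_mem_gen mem_gen by blast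
  have "polar b k = 0" if k: "k \<in> ?K" for k
  proof -
    have "k \<odot> w1 \<in> double ?K w1"
      using double_memI[of 0 ?K k w1] K k by (simp add: subalgebra_zero)
    then have "polar w2 (k \<odot> w1) = 0"
      using w2(1) by (simp add: perp_def)
    then have "polar b k * n w1 = 0"
      using ab(3) \<open>a = 0\<close> by (simp add: polar_mult_right_same)
    then show ?thesis using w1 by (simp add: n_eq_0_iff)
  qed
  then have "b = 0" using gen_nondegenerate[OF d ab(2)] one_mem_gen mem_gen by blast
  then show False using w2 ab \<open>a = 0\<close> by (simp add: cmult_zero_left)
qed

lemma double_double_coeffs_zero:
  assumes A: "subalgebra A" and w1: "perp w1 A" "w1 \<notin> A" and w2: "w2 \<notin> double A w1"
    and k: "k0 \<in> A" "k1 \<in> A" "k2 \<in> A" "k3 \<in> A"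
    and eq: "(k0 + k1 \<odot> w1) + (k2 + k3 \<odot> w1) \<odot> w2 = 0"
  shows "k0 = 0 \<and> k1 = 0 \<and> k2 = 0 \<and> k3 = 0"
proof -
  have Q: "subalgebra (double A w1)" by (rule subalgebra_double[OF A w1(1)])
  have "(k0 + k1 \<odot> w1) + (k2 + k3 \<odot> w1) \<odot> w2 = 0 + 0 \<odot> w2"
    using eq by (simp add: cmult_zero_left)
  then have "k0 + k1 \<odot> w1 = 0 \<and> k2 + k3 \<odot> w1 = 0"
    by (rule double_coeffs_unique[OF Q w2 double_memI[OF k(1,2)] double_memI[OF k(3,4)]
          subalgebra_zero[OF Q] subalgebra_zero[OF Q]])
  then have "k0 + k1 \<odot> w1 = 0 + 0 \<odot> w1" "k2 + k3 \<odot> w1 = 0 + 0 \<odot> w1"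
    by (simp_all add: cmult_zero_left)
  then show ?thesis
    using double_coeffs_unique[OF A w1(2) _ _ subalgebra_zero[OF A] subalgebra_zero[OF A]] k
    by blast
qed

lemma double_double_gen_eq_UNIV:
  assumes d: "disc e \<noteq> 0"
    and w1: "perp w1 (gen_subalgebra e)" "w1 \<notin> gen_subalgebra e"
    and w2: "perp w2 (double (gen_subalgebra e) w1)" "w2 \<notin> double (gen_subalgebra e) w1"
  shows "double (double (gen_subalgebra e) w1) w2 = UNIV"
proof -
  let ?K = "gen_subalgebra e"
  let ?Q = "double ?K w1"
  let ?R = "double ?Q w2"
  have K: "subalgebra ?K" by (rule subalgebra_gen)
  have Q: "subalgebra ?Q" by (rule subalgebra_double[OF K w1(1)])
  have R: "subalgebra ?R" by (rule subalgebra_double[OF Q w2(1)])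
  define f where "f i = [one, e, w1, e \<odot> w1, w2, e \<odot> w2, w1 \<odot> w2, (e \<odot> w1) \<odot> w2] ! i" for i
  have "span (f ` {..<dim UNIV}) = UNIV"
  proof (rule fdim.independent_family_span_UNIV)
    fix c :: "nat \<Rightarrow> 'f"
    assume "(\<Sum>i<dim UNIV. c i *s f i) = 0"
    then have sum0: "(\<Sum>i<8. c i *s f i) = 0" by (simp only: dim_UNIV_eq_8)
    define k where "k j = c (2 * j) *s one + c (2 * j + 1) *s e" for j
    have "(\<Sum>i<8. c i *s f i) = (k 0 + k 1 \<odot> w1) + (k 2 + k 3 \<odot> w1) \<odot> w2"
      by (simp add: f_def eval_nat_numeral k_def cmult_simps algebra_simps)
    then have "(k 0 + k 1 \<odot> w1) + (k 2 + k 3 \<odot> w1) \<odot> w2 = 0" using sum0 by simp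
    then have "k 0 = 0 \<and> k 1 = 0 \<and> k 2 = 0 \<and> k 3 = 0"
      using double_double_coeffs_zero[OF K w1 w2(2)] gen_memI unfolding k_def by blast
    then have "c i = 0" if "i < 8" for i
      using gen_coeffs_unique[OF d, of _ _ 0 0] that
      by (auto simp: k_def eval_nat_numeral less_Suc_eq)
    then show "\<forall>i<dim UNIV. c i = 0" unfolding dim_UNIV_eq_8 by blast
  qed
  moreover have "f ` {..<dim UNIV} \<subseteq> ?R"
  proof -
    have "x \<in> ?R" if "x \<in> ?Q" for x using Q that by (rule mem_double_base)
    then have "one \<in> ?R" "e \<in> ?R" "w1 \<in> ?R" "w2 \<in> ?R"
      using K Q by (simp_all add: mem_double_base mem_double_generator one_mem_gen mem_gen)
    then show ?thesis
      unfolding dim_UNIV_eq_8 using R by (auto simp: f_def eval_nat_numeral less_Suc_eq subalgebra_mult)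
  qed
  ultimately show ?thesis
    using span_minimal[of "f ` {..<dim UNIV}" ?R] R by (auto simp: subalgebra_def)
qed

lemma exists_aut_frame:
  assumes d: "disc e \<noteq> 0" and e': "trace e' = trace e" "n e' = n e"
    and w1: "polar w1 one = 0" "polar w1 e = 0" "w1 \<noteq> 0"
    and w1': "polar w1' one = 0" "polar w1' e' = 0" "n w1' = n w1"
    and w2: "polar w2 one = 0" "polar w2 e = 0" "polar w2 w1 = 0" "polar w2 (e \<odot> w1) = 0" "w2 \<noteq> 0"
    and w2': "polar w2' one = 0" "polar w2' e' = 0" "polar w2' w1' = 0" "polar w2' (e' \<odot> w1') = 0"
      "n w2' = n w2"
  shows "\<exists>\<phi>. aut \<phi> \<and> \<phi> e = e' \<and> \<phi> w1 = w1' \<and> \<phi> w2 = w2'"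
proof -
  let ?K = "gen_subalgebra e" and ?K' = "gen_subalgebra e'"
  let ?Q = "double ?K w1" and ?Q' = "double ?K' w1'"
  define \<sigma>1 where "\<sigma>1 = double_ext ?K (gen_iso e e') w1 w1'"
  define \<sigma>2 where "\<sigma>2 = double_ext ?Q \<sigma>1 w2 w2'"
  have K: "subalgebra ?K" "subalgebra ?K'" by (rule subalgebra_gen)+
  have \<sigma>0: "isometric_hom_on (gen_iso e e') ?K ?K'" by (rule ihom_gen_iso[OF d e'])
  have pw1: "perp w1 ?K" "perp w1' ?K'" by (rule perp_gen, fact+)+
  have w1K: "w1 \<notin> ?K" by (rule perp_notin_gen[OF d w1(3) pw1(1)])
  note ext1 = isometric_hom_on_double_ext double_ext_base double_ext_generator
  note ext1 = ext1[OF K \<sigma>0 pw1(1) w1K pw1(2) w1'(3), folded \<sigma>1_def]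
  have Q: "subalgebra ?Q" "subalgebra ?Q'"
    by (rule subalgebra_double[OF K(1) pw1(1)], rule subalgebra_double[OF K(2) pw1(2)])
  have pw2: "perp w2 ?Q" "perp w2' ?Q'" using w2 w2' by (simp_all add: perp_double_gen_iff)
  have w2Q: "w2 \<notin> ?Q" by (rule perp_notin_double_gen[OF d pw1(1) w1(3) pw2(1) w2(5)])
  note ext2 = isometric_hom_on_double_ext double_ext_base double_ext_generator
  note ext2 = ext2[OF Q ext1(1) pw2(1) w2Q pw2(2) w2'(5), folded \<sigma>2_def]
  have "aut \<sigma>2"
    using ext2(1) unfolding double_double_gen_eq_UNIV[OF d pw1(1) w1K pw2(1) w2Q]
    by (rule aut_if_isometric_hom_on_UNIV)
  moreover have "\<sigma>2 e = e'" "\<sigma>2 w1 = w1'" "\<sigma>2 w2 = w2'"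
    using ext1 ext2 gen_iso_eq[OF d, of e' 0 1] mem_gen mem_double_base[OF K(1) mem_gen]
      mem_double_generator[OF K(1)]
    by simp_all
  ultimately show ?thesis by blast
qed

lemma aut_fixing_moving_disc_nonzero:
  assumes d: "disc X \<noteq> 0"
    and Y: "trace Y1 = trace Y2" "polar X Y1 = polar X Y2" "n Y1 = n Y2"
  shows "\<exists>\<phi>. aut \<phi> \<and> \<phi> X = X \<and> \<phi> Y1 = Y2"
proof -
  obtain p where p: "p \<in> gen_subalgebra X"
    and v: "polar (Y1 - p) one = 0" "polar (Y1 - p) X = 0"
    and v': "polar (Y2 - p) one = 0" "polar (Y2 - p) X = 0"
    using gen_common_projection[OF d, of Y1 Y2] Y by (auto simp: trace_def polar_commute[of X])
  define v where "v = Y1 - p"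
  define v' where "v' = Y2 - p"
  have "polar p v = 0" "polar p v' = 0"
    using perp_gen[of v X] perp_gen[of v' X] p v v'
    by (simp_all add: perp_def polar_commute[of p] v_def v'_def)
  then have "n Y1 = n p + n v" "n Y2 = n p + n v'"
    using n_add[of p v] n_add[of p v'] by (simp_all add: v_def v'_def)
  then have nv: "n v' = n v" using Y by simp
  show ?thesis
  proof (cases "v = 0")
    case True
    then have "Y1 = Y2" using nv by (simp add: n_eq_0_iff v_def v'_def)
    then show ?thesis using aut_id by auto
  next
    case False
    obtain w where w: "w \<noteq> 0" "\<forall>s\<in>set [one, X, v, X \<odot> v, v', X \<odot> v']. polar w s = 0"
      using exists_nonzero_perp[of "[one, X, v, X \<odot> v, v', X \<odot> v']"] by auto
    obtain \<phi> where \<phi>: "aut \<phi>" "\<phi> X = X" "\<phi> v = v'"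
      using exists_aut_frame[of X X v v' w w] d False nv w v v' by (auto simp: v_def v'_def)
    have "\<phi> Y1 = \<phi> p + \<phi> v" by (simp add: v_def aut_add[OF \<phi>(1), symmetric])
    then have "\<phi> Y1 = Y2" using aut_fixes_gen[OF \<phi>(1,2) p] \<phi>(3) by (simp add: v'_def)
    then show ?thesis using \<phi> by blast
  qed
qed

lemma disc_zero_imp_char_2:
  assumes d: "disc x = 0" and x: "\<And>c. x \<noteq> c *s one"
  shows "(2::'f) = 0 \<and> trace x = 0"
proof (cases "(2::'f) = 0")
  case True
  then have "(4::'f) = 0" by (rule four_eq_0_if_two_eq_0)
  then show ?thesis using d True by (simp add: disc_def)
next
  case False
  define h where "h = trace x / 2"
  define z where "z = x - h *s one"
  have hh: "trace x = h + h" using False by (simp add: h_def field_simps)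
  have "z \<odot> z = x \<odot> x - h *s x - h *s x + (h * h) *s one"
    by (simp add: z_def cmult_simps algebra_simps)
  also have "\<dots> = x \<odot> x - (h + h) *s x + (h * h) *s one"
    by (simp only: scale_left_distrib diff_diff_eq)
  also have "\<dots> = (h * h - n x) *s one"
    by (simp add: mult_self flip: hh) (simp add: algebra_simps)
  finally have "z \<odot> z = (h * h - n x) *s one" .
  moreover have "4 * (h * h - n x) = disc x"
    by (simp add: disc_def hh algebra_simps)
  moreover have "(2::'f) * 2 \<noteq> 0" using False by (simp only: mult_eq_0_iff) simp
  ultimately have "z \<odot> z = 0" using d by simp
  then have "x = h *s one" by (simp add: cmult_eq_0_iff z_def)
  then show ?thesis using x by blast
qed

lemma aut_fixing_moving_char_2_polar_nonzero:
  assumes two: "(2::'f) = 0" and X: "X \<noteq> 0" "trace X = 0"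
    and Y: "trace Y1 = 0" "trace Y2 = 0" "polar X Y1 = polar X Y2" "n Y1 = n Y2"
    and XY: "polar X Y1 \<noteq> 0"
  shows "\<exists>\<phi>. aut \<phi> \<and> \<phi> X = X \<and> \<phi> Y1 = Y2"
proof -
  \<comment> \<open>the product \<open>X \<odot> Y1\<close> has nonzero discriminant and determines \<open>Y1\<close>\<close>
  define e where "e = X \<odot> Y1"
  define e' where "e' = X \<odot> Y2"
  have "(4::'f) = 0" using two by (rule four_eq_0_if_two_eq_0)
  then have d: "disc e \<noteq> 0" using XY X Y by (simp add: disc_def e_def trace_mult)
  have e': "trace e' = trace e" "n e' = n e"
    using X Y by (simp_all add: e_def e'_def trace_mult n_mult)
  have Xe: "polar X e = 0" "polar X e' = 0"
    using polar_mult_left_same[of X one Y1] polar_mult_left_same[of X one Y2] Y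
    by (simp_all add: e_def e'_def polar_one_left)
  obtain w where w: "w \<noteq> 0" "\<forall>s\<in>set [one, e, X, e \<odot> X, e', e' \<odot> X]. polar w s = 0"
    using exists_nonzero_perp[of "[one, e, X, e \<odot> X, e', e' \<odot> X]"] by auto
  obtain \<phi> where \<phi>: "aut \<phi>" "\<phi> e = e'" "\<phi> X = X"
    using exists_aut_frame[of e e' X X w w] d e' Xe X w
    by (auto simp: trace_def polar_commute[of X])
  have key: "n X *s Y = - (X \<odot> (X \<odot> Y))" for Y
    using conjugate_mult_cancel_left[of X Y] X by (simp add: conjugate_trace_zero cmult_minus_left)
  have "n X *s \<phi> Y1 = \<phi> (n X *s Y1)" by (simp add: aut_scale[OF \<phi>(1)])
  also have "\<dots> = - (\<phi> X \<odot> \<phi> e)"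
    by (simp add: key e_def aut_minus[OF \<phi>(1)] aut_mult[OF \<phi>(1)])
  also have "\<dots> = n X *s Y2"
    by (simp add: \<phi> key e'_def)
  finally have "n X *s \<phi> Y1 = n X *s Y2" .
  then have "\<phi> Y1 = Y2" using X by (simp add: n_eq_0_iff)
  then show ?thesis using \<phi> by blast
qed

lemma eq_if_one_mem_span:
  assumes X: "\<And>c. X \<noteq> c *s one" "trace X = 0"
    and Y: "trace Y1 = 0" "polar X Y1 = 0" "n Y1 = n Y2"
    and one: "one \<in> span {X, Y1 - Y2, (Y1 - Y2) \<odot> conjugate X}"
  shows "Y1 = Y2"
proof -
  define d where "d = Y1 - Y2"
  obtain a b g where one_eq: "one = a *s X + b *s d + g *s (d \<odot> conjugate X)"
    using one by (auto simp: d_def span_breakdown_eq span_empty algebra_simps)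
  define k where "k = b *s one - g *s X"
  have "d \<odot> k = b *s d + g *s (d \<odot> conjugate X)"
    by (simp add: k_def conjugate_trace_zero[OF X(2)] cmult_simps)
  also have "\<dots> = one - a *s X"
    using one_eq by (simp add: algebra_simps)
  finally have dk: "d \<odot> k = one - a *s X" .
  have k: "k \<in> gen_subalgebra X" and "one - a *s X \<in> gen_subalgebra X"
    using gen_memI[of b "- g" X] gen_memI[of 1 "- a" X] by (simp_all add: k_def)
  have "k \<noteq> 0"
  proof
    assume "k = 0"
    then have "one = a *s X" using dk by (simp add: cmult_zero_right)
    then have "X = inverse a *s one" using one_neq_zero by auto
    then show False using X by blast
  qed
  have "n k *s d = (one - a *s X) \<odot> conjugate k"
    using mult_conjugate_cancel_right[of d k] dk by simp
  then have "d = inverse (n k) *s ((one - a *s X) \<odot> conjugate k)"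
    using \<open>k \<noteq> 0\<close> by (metis n_eq_0_iff scale_one scale_scale left_inverse)
  then have "d \<in> gen_subalgebra X"
    using subalgebra_gen k \<open>one - a *s X \<in> gen_subalgebra X\<close> by (simp add: subalgebra_closed)
  then have "polar Y1 d = 0"
    using perp_gen[of Y1 X] Y by (simp add: perp_def trace_def polar_commute[of X])
  then have "n d = 0"
    using n_diff[of Y1 d] Y by (simp add: d_def)
  then show ?thesis by (simp add: n_eq_0_iff d_def)
qed

lemma aut_fixing_moving_char_2_polar_zero:
  assumes two: "(2::'f) = 0" and X: "\<And>c. X \<noteq> c *s one" "trace X = 0"
    and Y: "trace Y1 = 0" "trace Y2 = 0" "polar X Y1 = 0" "polar X Y2 = 0" "n Y1 = n Y2"
  shows "\<exists>\<phi>. aut \<phi> \<and> \<phi> X = X \<and> \<phi> Y1 = Y2"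
proof (cases "one \<in> span {X, Y1 - Y2, (Y1 - Y2) \<odot> conjugate X}")
  case True
  then have "Y1 = Y2" using eq_if_one_mem_span[OF X] Y by blast
  then show ?thesis using aut_id by auto
next
  case False
  \<comment> \<open>pick \<open>u\<close> with trace 1, spanning with \<open>X\<close> a quaternion subalgebra that cannot tell \<open>Y1\<close> from \<open>Y2\<close>\<close>
  obtain u where u: "polar u one = 1" "polar u X = 0" "polar u (Y1 - Y2) = 0"
    "polar u ((Y1 - Y2) \<odot> conjugate X) = 0"
    using exists_polar_dual[OF False] by auto
  let ?U = "gen_subalgebra u"
  let ?H = "double ?U X"
  have "(4::'f) = 0" using two by (rule four_eq_0_if_two_eq_0)
  then have du: "disc u \<noteq> 0" using u by (simp add: disc_def trace_def)
  have "X \<noteq> 0" using X(1)[of 0] by simp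
  then have nX: "n X \<noteq> 0" by (simp add: n_eq_0_iff)
  have "trace Y1 = trace Y2" using Y by simp
  then obtain q where q: "q \<in> ?H" and perp: "perp (Y1 - q) ?H" "perp (Y2 - q) ?H"
    using double_gen_common_projection[OF du X(2) nX u(2) _ Y(3,4) u(3,4)] by blast
  then have "n Y1 = n q + n (Y1 - q)" "n Y2 = n q + n (Y2 - q)"
    using q n_add[of q "Y1 - q"] n_add[of q "Y2 - q"] by (simp_all add: perp_def polar_commute[of q])
  then have nw: "n (Y2 - q) = n (Y1 - q)" using Y by simp
  show ?thesis
  proof (cases "Y1 - q = 0")
    case True
    then have "Y1 = Y2" using nw by (simp add: n_eq_0_iff)
    then show ?thesis using aut_id by auto
  next
    case False
    obtain \<phi> where \<phi>: "aut \<phi>" "\<phi> u = u" "\<phi> X = X" "\<phi> (Y1 - q) = Y2 - q"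
      using exists_aut_frame[of u u X X "Y1 - q" "Y2 - q"] du u(2) X(2) \<open>X \<noteq> 0\<close> False nw perp
      by (auto simp: perp_double_gen_iff trace_def polar_commute[of X])
    have "\<phi> Y1 = \<phi> q + \<phi> (Y1 - q)" by (simp add: aut_add[OF \<phi>(1), symmetric])
    then have "\<phi> Y1 = Y2" using aut_fixes_double_gen[OF \<phi>(1-3) q] \<phi>(4) by simp
    then show ?thesis using \<phi> by blast
  qed
qed

lemma aut_fixing_moving:
  assumes X: "\<And>c. X \<noteq> c *s one"
    and Y: "trace Y1 = trace Y2" "polar X Y1 = polar X Y2" "n Y1 = n Y2"
    and disc: "disc X \<noteq> 0 \<or> trace Y1 = 0"
  shows "\<exists>\<phi>. aut \<phi> \<and> \<phi> X = X \<and> \<phi> Y1 = Y2"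
proof (cases "disc X = 0")
  case True
  then have char: "(2::'f) = 0" "trace X = 0" "trace Y1 = 0" "trace Y2 = 0"
    using disc_zero_imp_char_2[OF _ X] disc Y by auto
  show ?thesis
  proof (cases "polar X Y1 = 0")
    case True
    then show ?thesis using aut_fixing_moving_char_2_polar_zero[OF char(1) X char(2-4)] Y by simp
  next
    case False
    then show ?thesis
      using aut_fixing_moving_char_2_polar_nonzero[OF char(1) _ char(2-4)] X[of 0] Y by simp
  qed
qed (use aut_fixing_moving_disc_nonzero Y in blast)

section \<open>Local and 2-local automorphisms\<close>

lemma local_aut_agrees_on_pair:
  assumes \<psi>: "local_automorphism scale mult \<psi>"
    and xy: "(\<exists>c. x = c *s one) \<or> disc x \<noteq> 0 \<or> trace y = 0"
  shows "\<exists>\<phi>. aut \<phi> \<and> \<psi> x = \<phi> x \<and> \<psi> y = \<phi> y"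
proof -
  obtain \<theta> where \<theta>: "aut \<theta>" "\<psi> x = \<theta> x" using local_aut_pointwise[OF \<psi>] by blast
  show ?thesis
  proof (cases "\<exists>c. x = c *s one")
    case True
    obtain \<theta>' where "aut \<theta>'" "\<psi> y = \<theta>' y" using local_aut_pointwise[OF \<psi>] by blast
    then show ?thesis using True local_aut_scale_one[OF \<psi>] aut_scale_one by metis
  next
    case False
    \<comment> \<open>move \<open>\<theta> y\<close> to \<open>\<psi> y\<close> by an automorphism fixing \<open>\<psi> x = \<theta> x\<close>\<close>
    have "\<psi> x \<noteq> c *s one" for c
      using False \<theta> bij_is_inj[OF aut_bij[OF \<theta>(1)]] aut_scale_one[OF \<theta>(1)] by (metis injD)
    moreover have "disc (\<psi> x) = disc x"
      by (simp add: disc_def local_aut_n[OF \<psi>] local_aut_trace[OF \<psi>])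
    moreover have "polar (\<psi> x) (\<theta> y) = polar (\<psi> x) (\<psi> y)"
      using \<theta> aut_polar[OF \<theta>(1), of x y] local_aut_polar[OF \<psi>, of x y] by simp
    ultimately obtain \<chi> where \<chi>: "aut \<chi>" "\<chi> (\<psi> x) = \<psi> x" "\<chi> (\<theta> y) = \<psi> y"
      using aut_fixing_moving[of "\<psi> x" "\<theta> y" "\<psi> y"] False xy \<theta>(1)
      by (auto simp: aut_trace aut_n local_aut_trace[OF \<psi>] local_aut_n[OF \<psi>])
    then show ?thesis using \<theta> by (intro exI[of _ "\<chi> \<circ> \<theta>"]) (auto simp: aut_comp)
  qed
qed

lemma local_aut_imp_two_local_aut:
  assumes \<psi>: "local_automorphism scale mult \<psi>"
  shows "two_local_automorphism scale mult \<psi>"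
  unfolding two_local_automorphism_def
proof (intro allI)
  fix x y
  show "\<exists>\<phi>. aut \<phi> \<and> \<psi> x = \<phi> x \<and> \<psi> y = \<phi> y"
  proof (cases "(\<exists>c. x = c *s one) \<or> disc x \<noteq> 0 \<or> trace y = 0")
    case True
    then show ?thesis by (rule local_aut_agrees_on_pair[OF \<psi>])
  next
    case False
    then have "trace x = 0" using disc_zero_imp_char_2[of x] by blast
    then show ?thesis using local_aut_agrees_on_pair[OF \<psi>, of y x] by blast
  qed
qed

lemma two_local_aut_imp_local_aut:
  assumes \<Delta>: "two_local_automorphism scale mult \<Delta>"
  shows "local_automorphism scale mult \<Delta>"
proof -
  have pair: "\<exists>\<phi>. aut \<phi> \<and> \<Delta> a = \<phi> a \<and> \<Delta> b = \<phi> b" for a b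
    using \<Delta> unfolding two_local_automorphism_def by blast
  have n\<Delta>: "n (\<Delta> a) = n a" and polar\<Delta>: "polar (\<Delta> a) (\<Delta> b) = polar a b" for a b
    using pair[of a b] by (auto simp: aut_n aut_polar)
  have "n (\<Delta> (a + b) - \<Delta> a - \<Delta> b) = n ((a + b) - a - b)" for a b
    by (simp only: n_diff n_add polar_diff_left polar_add_right n\<Delta> polar\<Delta>)
  then have add: "\<Delta> (a + b) = \<Delta> a + \<Delta> b" for a b
    by (simp add: n_eq_0_iff algebra_simps)
  have "n (\<Delta> (c *s a) - c *s \<Delta> a) = n (c *s a - c *s a)" for c a
    by (simp only: n_diff n_scale polar_scale_right n\<Delta> polar\<Delta>)
  then have scale: "\<Delta> (c *s a) = c *s \<Delta> a" for c a
    by (simp add: n_eq_0_iff)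
  show ?thesis
    unfolding local_automorphism_def Vector_Spaces.linear_iff
    using add scale vector_space_axioms pair by blast
qed

end

theorem theorem4p5:
  fixes scale :: "'f::field \<Rightarrow> 'v::ab_group_add \<Rightarrow> 'v"
    and mult :: "'v \<Rightarrow> 'v \<Rightarrow> 'v" and one :: 'v and n :: "'v \<Rightarrow> 'f"
  assumes "division_cayley_algebra scale mult one n"
  shows "(\<forall>\<psi>. local_automorphism scale mult \<psi> \<longrightarrow> two_local_automorphism scale mult \<psi>)
     \<and> {\<psi>. local_automorphism scale mult \<psi>} = {\<Delta>. two_local_automorphism scale mult \<Delta>}"
proof -
  interpret division_cayley scale mult one n
    using assms unfolding division_cayley_algebra_def
    by (intro division_cayley.intro cayley.intro division_cayley_axioms.intro cayley_axioms.intro)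
      (simp_all add: cayley_algebra_def)
  show ?thesis
    using local_aut_imp_two_local_aut two_local_aut_imp_local_aut by blast
qed

end
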